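(* Let $0<q<1$. Then \[ \sum_{n=0}^{\infty}\frac{(1/2|q^{2})_{n}^{2}}{[n]_{q^{2}}!\,[n+2]_{q^{2}}!}\,q^{4n}=\frac{(1+q)^{4}q^{1/4}}{\pi_{q}(1+q+q^{2})^{2}}. \]
   Context: Let $0<q<1$ and write $q^{x}=e^{x\log q}$. $[z]_{q^2}=\frac{1-q^{2z}}{1-q^2}$; $[0]_{q^2}!=1$, $[n]_{q^2}!=\prod_{k=1}^n[k]_{q^2}$; $(1/2|q^2)_n=\prod_{k=0}^{n-1}[1/2+k]_{q^2}$ (empty product $=1$). With $(z;q)_\infty=\prod_{k\ge0}(1-zq^k)$, $\pi_q=(1-q^2)q^{1/4}\frac{(q^2;q^2)_\infty^2}{(q;q^2)_\infty^2}$. *)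

theory Defs
  imports "HOL-Analysis.Analysis"
begin

definition qnum :: "real \<Rightarrow> real \<Rightarrow> real" where
  "qnum Q z = (1 - Q powr z) / (1 - Q)"

definition qfact :: "real \<Rightarrow> nat \<Rightarrow> real" where
  "qfact Q n = (\<Prod>k=1..n. qnum Q (real k))"

text \<open>(1/2|Q)_n = prod_{k=0}^{n-1} [1/2 + k]_Q\<close>
definition qhalf_poch :: "real \<Rightarrow> nat \<Rightarrow> real" where
  "qhalf_poch Q n = (\<Prod>k<n. qnum Q (1/2 + real k))"

definition qpoch_inf :: "real \<Rightarrow> real \<Rightarrow> real" where
  "qpoch_inf z q = (\<Prod>k. 1 - z * q ^ k)"

definition pi_q :: "real \<Rightarrow> real" where
  "pi_q q = (1 - q^2) * q powr (1/4) * (qpoch_inf (q^2) (q^2))^2 / (qpoch_inf q (q^2))^2"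

end

theory Submission
  imports Defs
begin

text \<open>
  The series is the q-Gauss sum
  \<open>\<^sub>2\<phi>\<^sub>1(a, b; c; Q, c/(ab)) = (c/a; Q)\<^sub>\<infinity> (c/b; Q)\<^sub>\<infinity> / ((c; Q)\<^sub>\<infinity> (c/(ab); Q)\<^sub>\<infinity>)\<close>
  with \<open>Q = q\<^sup>2\<close>, \<open>a = b = q\<close>, \<open>c = q\<^sup>6\<close>. For \<open>a = b = \<surd>Q\<close> the sum \<open>S(z)\<close> of the series with
  argument \<open>z\<close> satisfies the contiguity relation \<open>(1 - z a\<^sup>2)(1 - z) S(z) = (1 - z a)\<^sup>2 S(z a\<^sup>2)\<close>,
  obtained by telescoping the ratios of consecutive terms. Iterating it and letting
  \<open>z a\<^sup>2\<^sup>M \<rightarrow> 0\<close>, where \<open>S \<rightarrow> 1\<close> because the terms are dominated by \<open>z\<^sup>n\<close>, expresses \<open>S(z)\<close> as a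
  quotient of infinite products. Writing the q-factorials as finite q-Pochhammer symbols and splitting
  the first factors off the infinite products in \<open>\<pi>\<^sub>q\<close> gives the stated value.
\<close>

definition qpoch_fin :: "real \<Rightarrow> real \<Rightarrow> nat \<Rightarrow> real" where
  "qpoch_fin x Q n = (\<Prod>k<n. 1 - x * Q ^ k)"

lemma qpoch_fin_0 [simp]: "qpoch_fin x Q 0 = 1"
  by (simp add: qpoch_fin_def)

lemma qpoch_fin_Suc: "qpoch_fin x Q (Suc n) = qpoch_fin x Q n * (1 - x * Q ^ n)"
  by (simp add: qpoch_fin_def)

lemma qpoch_fin_Suc_shift: "qpoch_fin x Q (Suc n) = (1 - x) * qpoch_fin (x * Q) Q n"
  unfolding qpoch_fin_def prod.lessThan_Suc_shift by (simp add: mult.assoc)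

lemma mult_less_one_of_le_one:
  fixes x y :: real
  assumes "x < 1" "0 \<le> y" "y \<le> 1"
  shows "x * y < 1"
  using assms mult_left_le[of y x] mult_nonpos_nonneg[of x y] by (cases "0 \<le> x") auto

lemma qpoch_factor_pos:
  fixes x Q :: real
  assumes "x < 1" "0 \<le> Q" "Q \<le> 1"
  shows "0 < 1 - x * Q ^ k"
  using mult_less_one_of_le_one[OF assms(1)] assms(2,3) by (simp add: power_le_one)

lemma qpoch_fin_pos:
  fixes x Q :: real
  assumes "x < 1" "0 \<le> Q" "Q \<le> 1"
  shows "0 < qpoch_fin x Q n"
  unfolding qpoch_fin_def using qpoch_factor_pos[OF assms] by (intro prod_pos) auto

lemma qpoch_inf_convergent:
  fixes x Q :: real
  assumes "x < 1" "0 \<le> Q" "Q < 1"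
  shows "convergent_prod (\<lambda>k. 1 - x * Q ^ k)"
proof -
  have "convergent_prod (\<lambda>k. 1 + (- (x * Q ^ k)))"
  proof (rule summable_imp_convergent_prod_real)
    have "summable (\<lambda>k. \<bar>x\<bar> * Q ^ k)"
      using assms by (intro summable_mult summable_geometric) auto
    then show "summable (\<lambda>k. \<bar>- (x * Q ^ k)\<bar>)"
      using assms by (simp add: abs_mult)
    show "- (x * Q ^ k) \<noteq> -1" for k
      using qpoch_factor_pos[of x Q k] assms by auto
  qed
  then show ?thesis by simp
qed

lemma qpoch_fin_tendsto_qpoch_inf:
  fixes x Q :: real
  assumes "x < 1" "0 \<le> Q" "Q < 1"
  shows "qpoch_fin x Q \<longlonglongrightarrow> qpoch_inf x Q"
  unfolding qpoch_fin_def[abs_def] qpoch_inf_def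
  using convergent_prod_has_prod[OF qpoch_inf_convergent[OF assms]]
  by (rule has_prod_imp_tendsto')

lemma qpoch_inf_nonzero:
  fixes x Q :: real
  assumes "x < 1" "0 \<le> Q" "Q < 1"
  shows "qpoch_inf x Q \<noteq> 0"
  unfolding qpoch_inf_def
proof (rule prodinf_nonzero[OF qpoch_inf_convergent[OF assms]])
  show "1 - x * Q ^ k \<noteq> 0" for k
    using qpoch_factor_pos[of x Q k] assms by simp
qed

lemma qpoch_inf_shift:
  fixes x Q :: real
  assumes "x < 1" "0 \<le> Q" "Q < 1"
  shows "qpoch_inf x Q = (1 - x) * qpoch_inf (x * Q) Q"
proof -
  have "(\<Prod>k. 1 - x * Q ^ Suc k) = qpoch_inf x Q / (1 - x * Q ^ 0)"
    unfolding qpoch_inf_def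
    by (rule prodinf_split_head[OF qpoch_inf_convergent[OF assms]]) (use assms in simp)
  moreover have "(\<lambda>k. 1 - x * Q ^ Suc k) = (\<lambda>k. 1 - x * Q * Q ^ k)"
    by (simp add: mult_ac)
  ultimately show ?thesis
    using assms unfolding qpoch_inf_def by simp
qed

lemma square_one_minus_le_mult:
  fixes a c y :: real
  assumes "0 \<le> a" "a \<le> 1" "0 \<le> c" "c \<le> a" "0 \<le> y" "y \<le> 1"
  shows "(1 - a * y)\<^sup>2 \<le> (1 - a\<^sup>2 * y) * (1 - c * y)"
proof -
  have "c * (1 + a) \<le> a * (1 + a)" "a * (1 + a) \<le> a * 2"
    using assms by (intro mult_right_mono mult_left_mono; simp)+
  then have "0 \<le> 2 * a - c * (1 + a)"
    by linarith
  then have "0 \<le> (1 - a) * (2 * a - c * (1 + a)) + a\<^sup>2 * (1 - c) * (1 - y)"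
    using assms by (intro add_nonneg_nonneg mult_nonneg_nonneg) auto
  then have "0 \<le> y * ((1 - a) * (2 * a - c * (1 + a)) + a\<^sup>2 * (1 - c) * (1 - y))"
    \<comment> \<open>this product is exactly the difference of the two sides\<close>
    using assms by simp
  then show ?thesis
    by (simp add: power2_eq_square algebra_simps)
qed

lemma qpoch_fin_square_le:
  fixes a c :: real
  assumes "0 \<le> a" "a \<le> 1" "0 \<le> c" "c \<le> a"
  shows "qpoch_fin a (a\<^sup>2) n ^ 2 \<le> qpoch_fin (a\<^sup>2) (a\<^sup>2) n * qpoch_fin c (a\<^sup>2) n"
proof -
  have "qpoch_fin a (a\<^sup>2) n ^ 2 = (\<Prod>k<n. (1 - a * (a\<^sup>2) ^ k)\<^sup>2)"
    by (simp add: qpoch_fin_def prod_power_distrib)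
  also have "\<dots> \<le> (\<Prod>k<n. (1 - a\<^sup>2 * (a\<^sup>2) ^ k) * (1 - c * (a\<^sup>2) ^ k))"
  proof (rule prod_mono)
    fix k
    have "0 \<le> (a\<^sup>2) ^ k" "(a\<^sup>2) ^ k \<le> 1"
      using assms by (simp_all add: power_le_one power_le_one_iff)
    then show "0 \<le> (1 - a * (a\<^sup>2) ^ k)\<^sup>2 \<and>
        (1 - a * (a\<^sup>2) ^ k)\<^sup>2 \<le> (1 - a\<^sup>2 * (a\<^sup>2) ^ k) * (1 - c * (a\<^sup>2) ^ k)"
      using square_one_minus_le_mult[OF assms] by simp
  qed
  also have "\<dots> = qpoch_fin (a\<^sup>2) (a\<^sup>2) n * qpoch_fin c (a\<^sup>2) n"
    by (simp add: qpoch_fin_def prod.distrib)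
  finally show ?thesis .
qed

text \<open>The \<open>n\<close>-th term of \<open>\<^sub>2\<phi>\<^sub>1(a, a; z a\<^sup>2; a\<^sup>2, z)\<close>.\<close>

definition qgauss_term :: "real \<Rightarrow> real \<Rightarrow> nat \<Rightarrow> real" where
  "qgauss_term a z n =
     qpoch_fin a (a\<^sup>2) n ^ 2 / (qpoch_fin (a\<^sup>2) (a\<^sup>2) n * qpoch_fin (z * a\<^sup>2) (a\<^sup>2) n) * z ^ n"

definition qgauss_sum :: "real \<Rightarrow> real \<Rightarrow> real" where
  "qgauss_sum a z = suminf (qgauss_term a z)"

context
  fixes a z :: real
  assumes a: "0 < a" "a < 1" and z: "0 \<le> z" "z < 1"
begin

lemma qgauss_parameter_bounds: "0 \<le> a\<^sup>2" "a\<^sup>2 < 1" "0 \<le> z * a\<^sup>2" "z * a\<^sup>2 < 1" "z * a\<^sup>2 \<le> a"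
proof -
  show "0 \<le> a\<^sup>2" "0 \<le> z * a\<^sup>2" using z by simp_all
  show "a\<^sup>2 < 1" using a by (simp add: power_less_one_iff)
  have "z * a\<^sup>2 \<le> a\<^sup>2" using a z by (simp add: mult_left_le_one_le)
  also have "a\<^sup>2 \<le> a" using a by (simp add: power2_eq_square mult_left_le_one_le)
  finally show "z * a\<^sup>2 \<le> a" .
  then show "z * a\<^sup>2 < 1" using a by linarith
qed

lemma qgauss_term_nonneg: "0 \<le> qgauss_term a z n"
  and qgauss_term_le: "qgauss_term a z n \<le> z ^ n"
proof -
  note ab = qgauss_parameter_bounds
  have den: "0 < qpoch_fin (a\<^sup>2) (a\<^sup>2) n * qpoch_fin (z * a\<^sup>2) (a\<^sup>2) n"
    using ab by (intro mult_pos_pos qpoch_fin_pos) auto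
  have le: "qpoch_fin a (a\<^sup>2) n ^ 2 \<le> qpoch_fin (a\<^sup>2) (a\<^sup>2) n * qpoch_fin (z * a\<^sup>2) (a\<^sup>2) n"
    using a ab by (intro qpoch_fin_square_le) auto
  define r where "r = qpoch_fin a (a\<^sup>2) n ^ 2 / (qpoch_fin (a\<^sup>2) (a\<^sup>2) n * qpoch_fin (z * a\<^sup>2) (a\<^sup>2) n)"
  have r: "0 \<le> r" "r \<le> 1"
    unfolding r_def using den le by simp_all
  have t: "qgauss_term a z n = r * z ^ n"
    unfolding qgauss_term_def r_def ..
  show "0 \<le> qgauss_term a z n" unfolding t using r z by simp
  show "qgauss_term a z n \<le> z ^ n" unfolding t using r z by (simp add: mult_left_le_one_le)
qed

lemma summable_qgauss_term: "summable (qgauss_term a z)"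
proof (rule summable_comparison_test)
  show "\<exists>N. \<forall>n\<ge>N. norm (qgauss_term a z n) \<le> z ^ n"
    using qgauss_term_nonneg qgauss_term_le by auto
  show "summable (\<lambda>n. z ^ n)"
    using z by (intro summable_geometric) auto
qed

lemma qgauss_term_Suc:
  "qgauss_term a z (Suc n) = qgauss_term a z n *
     ((1 - a * (a\<^sup>2) ^ n)\<^sup>2 * z / ((1 - a\<^sup>2 * (a\<^sup>2) ^ n) * (1 - z * a\<^sup>2 * (a\<^sup>2) ^ n)))"
proof -
  note ab = qgauss_parameter_bounds
  have "0 < qpoch_fin (a\<^sup>2) (a\<^sup>2) n" "0 < qpoch_fin (z * a\<^sup>2) (a\<^sup>2) n"
    "0 < 1 - a\<^sup>2 * (a\<^sup>2) ^ n" "0 < 1 - z * a\<^sup>2 * (a\<^sup>2) ^ n"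
    using a z ab by (intro qpoch_fin_pos qpoch_factor_pos; simp)+
  then show ?thesis
    unfolding qgauss_term_def qpoch_fin_Suc by (simp add: field_simps power2_eq_square)
qed

lemma qgauss_term_shift:
  "qgauss_term a (z * a\<^sup>2) n =
     qgauss_term a z n * ((1 - z * a\<^sup>2) * (a\<^sup>2) ^ n / (1 - z * a\<^sup>2 * (a\<^sup>2) ^ n))"
proof -
  note ab = qgauss_parameter_bounds
  define c x where "c = z * a\<^sup>2" and "x = (a\<^sup>2) ^ n"
  have pos: "0 < qpoch_fin (a\<^sup>2) (a\<^sup>2) n" "0 < qpoch_fin c (a\<^sup>2) n" "0 < 1 - c * x" "0 < 1 - c"
    unfolding c_def x_def using a z ab by (intro qpoch_fin_pos qpoch_factor_pos; simp)+
  have "(1 - c) * qpoch_fin (c * a\<^sup>2) (a\<^sup>2) n = qpoch_fin c (a\<^sup>2) n * (1 - c * x)"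
    unfolding x_def by (metis qpoch_fin_Suc qpoch_fin_Suc_shift)
  then have shifted: "qpoch_fin (c * a\<^sup>2) (a\<^sup>2) n = qpoch_fin c (a\<^sup>2) n * (1 - c * x) / (1 - c)"
    using pos by (simp add: field_simps)
  have "(z * a\<^sup>2) ^ n = z ^ n * x"
    unfolding x_def by (simp add: power_mult_distrib)
  with pos show ?thesis
    unfolding qgauss_term_def c_def[symmetric] x_def[symmetric] shifted
    by (simp add: field_simps)
qed

lemma qgauss_term_telescope:
  "(\<Sum>n<N. (1 - z * a\<^sup>2) * (1 - z) * qgauss_term a z n - (1 - z * a)\<^sup>2 * qgauss_term a (z * a\<^sup>2) n)
     = - (1 - z * a\<^sup>2) * (1 - (a\<^sup>2) ^ N) * qgauss_term a z N"
proof (induction N)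
  case 0
  then show ?case by simp
next
  case (Suc N)
  note ab = qgauss_parameter_bounds
  define x t where "x = (a\<^sup>2) ^ N" and "t = qgauss_term a z N"
  have pos: "0 < 1 - a\<^sup>2 * x" "0 < 1 - z * a\<^sup>2 * x"
    unfolding x_def using a z ab by (intro qpoch_factor_pos; simp)+
  have step: "qgauss_term a z (Suc N) = t * ((1 - a * x)\<^sup>2 * z / ((1 - a\<^sup>2 * x) * (1 - z * a\<^sup>2 * x)))"
    unfolding qgauss_term_Suc x_def t_def ..
  have shift: "qgauss_term a (z * a\<^sup>2) N = t * ((1 - z * a\<^sup>2) * x / (1 - z * a\<^sup>2 * x))"
    unfolding qgauss_term_shift x_def t_def ..
  have key: "(1 - z * a\<^sup>2 * x) * (x - z) - (1 - z * a)\<^sup>2 * x = - z * (1 - a * x)\<^sup>2"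
    by (simp add: power2_eq_square algebra_simps)
  have "(\<Sum>n<Suc N. (1 - z * a\<^sup>2) * (1 - z) * qgauss_term a z n - (1 - z * a)\<^sup>2 * qgauss_term a (z * a\<^sup>2) n)
      = - (1 - z * a\<^sup>2) * (1 - x) * t
        + ((1 - z * a\<^sup>2) * (1 - z) * t - (1 - z * a)\<^sup>2 * (t * ((1 - z * a\<^sup>2) * x / (1 - z * a\<^sup>2 * x))))"
    unfolding sum.lessThan_Suc Suc shift by (simp add: x_def t_def)
  also have "\<dots> = (1 - z * a\<^sup>2) * t
      * ((1 - z * a\<^sup>2 * x) * (x - z) - (1 - z * a)\<^sup>2 * x) / (1 - z * a\<^sup>2 * x)"
    using pos by (simp add: field_simps)
  also have "\<dots> = - (1 - z * a\<^sup>2) * (1 - a\<^sup>2 * x)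
      * (t * ((1 - a * x)\<^sup>2 * z / ((1 - a\<^sup>2 * x) * (1 - z * a\<^sup>2 * x))))"
    unfolding key using pos by (simp add: divide_simps) (simp add: algebra_simps)
  also have "\<dots> = - (1 - z * a\<^sup>2) * (1 - (a\<^sup>2) ^ Suc N) * qgauss_term a z (Suc N)"
    unfolding step by (simp add: x_def)
  finally show ?case .
qed

lemma qgauss_sum_bounds: "1 \<le> qgauss_sum a z" "qgauss_sum a z \<le> 1 + z / (1 - z)"
proof -
  have split: "qgauss_sum a z = 1 + (\<Sum>n. qgauss_term a z (Suc n))"
    unfolding qgauss_sum_def using suminf_split_head[OF summable_qgauss_term]
    by (simp add: qgauss_term_def)
  have summable_tail: "summable (\<lambda>n. qgauss_term a z (Suc n))"
    using summable_qgauss_term by (simp add: summable_Suc_iff)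
  have geometric_tail: "(\<lambda>n. z * z ^ n) sums (z / (1 - z))"
    using z sums_mult[OF geometric_sums, of z z] by simp
  have "0 \<le> (\<Sum>n. qgauss_term a z (Suc n))"
    using summable_tail qgauss_term_nonneg by (intro suminf_nonneg)
  moreover have "(\<Sum>n. qgauss_term a z (Suc n)) \<le> z / (1 - z)"
    using summable_tail geometric_tail qgauss_term_le[of "Suc _"]
    by (intro sums_le[OF _ summable_sums]) auto
  ultimately show "1 \<le> qgauss_sum a z" "qgauss_sum a z \<le> 1 + z / (1 - z)"
    unfolding split by simp_all
qed


end

lemma qgauss_sum_shift:
  fixes a z :: real
  assumes a: "0 < a" "a < 1" and z: "0 \<le> z" "z < 1"
  shows "(1 - z * a\<^sup>2) * (1 - z) * qgauss_sum a z = (1 - z * a)\<^sup>2 * qgauss_sum a (z * a\<^sup>2)"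
proof -
  note ab = qgauss_parameter_bounds[OF a z]
  let ?d = "\<lambda>n. (1 - z * a\<^sup>2) * (1 - z) * qgauss_term a z n - (1 - z * a)\<^sup>2 * qgauss_term a (z * a\<^sup>2) n"
  have "?d sums ((1 - z * a\<^sup>2) * (1 - z) * qgauss_sum a z - (1 - z * a)\<^sup>2 * qgauss_sum a (z * a\<^sup>2))"
    unfolding qgauss_sum_def using a z ab
    by (intro sums_diff sums_mult summable_sums summable_qgauss_term) auto
  moreover have "?d sums 0"
  proof -
    have "(\<lambda>N. - (1 - z * a\<^sup>2) * (1 - (a\<^sup>2) ^ N) * qgauss_term a z N) \<longlonglongrightarrow> - (1 - z * a\<^sup>2) * (1 - 0) * 0"
      using a z ab by (intro tendsto_intros LIMSEQ_power_zero summable_LIMSEQ_zero summable_qgauss_term) auto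
    then show ?thesis
      unfolding sums_def qgauss_term_telescope[OF a z] by simp
  qed
  ultimately show ?thesis
    using sums_unique2 by fastforce
qed

lemma qgauss_sum_iterate:
  fixes a z :: real
  assumes a: "0 < a" "a < 1" and z: "0 \<le> z" "z < 1"
  shows "qgauss_sum a z * qpoch_fin (z * a\<^sup>2) (a\<^sup>2) M * qpoch_fin z (a\<^sup>2) M
    = qgauss_sum a (z * (a\<^sup>2) ^ M) * qpoch_fin (z * a) (a\<^sup>2) M ^ 2"
proof (induction M)
  case 0
  then show ?case by simp
next
  case (Suc M)
  define y where "y = z * (a\<^sup>2) ^ M"
  have y: "0 \<le> y" "y < 1"
    unfolding y_def using a z by (simp_all add: mult_less_one_of_le_one power_le_one)
  have "qgauss_sum a z * qpoch_fin (z * a\<^sup>2) (a\<^sup>2) (Suc M) * qpoch_fin z (a\<^sup>2) (Suc M)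
      = qgauss_sum a z * qpoch_fin (z * a\<^sup>2) (a\<^sup>2) M * qpoch_fin z (a\<^sup>2) M
        * ((1 - y * a\<^sup>2) * (1 - y))"
    unfolding qpoch_fin_Suc y_def by (simp add: mult_ac)
  also have "\<dots> = qpoch_fin (z * a) (a\<^sup>2) M ^ 2 * ((1 - y * a\<^sup>2) * (1 - y) * qgauss_sum a y)"
    unfolding Suc y_def by (simp add: mult_ac)
  also have "\<dots> = qpoch_fin (z * a) (a\<^sup>2) M ^ 2 * ((1 - y * a)\<^sup>2 * qgauss_sum a (y * a\<^sup>2))"
    unfolding qgauss_sum_shift[OF a y] ..
  also have "\<dots> = qgauss_sum a (z * (a\<^sup>2) ^ Suc M) * qpoch_fin (z * a) (a\<^sup>2) (Suc M) ^ 2"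
    unfolding qpoch_fin_Suc y_def by (simp add: mult_ac power_mult_distrib)
  finally show ?case .
qed

lemma qgauss_sum_tendsto_one:
  fixes a z :: real
  assumes a: "0 < a" "a < 1" and z: "0 \<le> z" "z < 1"
  shows "(\<lambda>M. qgauss_sum a (z * (a\<^sup>2) ^ M)) \<longlonglongrightarrow> 1"
proof (rule tendsto_sandwich)
  have y: "0 \<le> z * (a\<^sup>2) ^ M" "z * (a\<^sup>2) ^ M < 1" for M
    using a z by (simp_all add: mult_less_one_of_le_one power_le_one)
  show "\<forall>\<^sub>F M in sequentially. 1 \<le> qgauss_sum a (z * (a\<^sup>2) ^ M)"
    using qgauss_sum_bounds(1)[OF a y] by simp
  show "\<forall>\<^sub>F M in sequentially. qgauss_sum a (z * (a\<^sup>2) ^ M)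
      \<le> 1 + z * (a\<^sup>2) ^ M / (1 - z * (a\<^sup>2) ^ M)"
    using qgauss_sum_bounds(2)[OF a y] by simp
  have "\<bar>a\<^sup>2\<bar> < 1"
    using a by (simp add: power_less_one_iff)
  then have "(\<lambda>M. 1 + z * (a\<^sup>2) ^ M / (1 - z * (a\<^sup>2) ^ M)) \<longlonglongrightarrow> 1 + z * 0 / (1 - z * 0)"
    by (intro tendsto_intros LIMSEQ_power_zero) auto
  then show "(\<lambda>M. 1 + z * (a\<^sup>2) ^ M / (1 - z * (a\<^sup>2) ^ M)) \<longlonglongrightarrow> 1"
    by simp
qed simp

theorem qgauss_sum_eq:
  fixes a z :: real
  assumes a: "0 < a" "a < 1" and z: "0 \<le> z" "z < 1"
  shows "qgauss_sum a z = qpoch_inf (z * a) (a\<^sup>2) ^ 2 / (qpoch_inf (z * a\<^sup>2) (a\<^sup>2) * qpoch_inf z (a\<^sup>2))"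
proof -
  note ab = qgauss_parameter_bounds[OF a z]
  have za: "0 \<le> z * a" "z * a < 1"
    using a z by (simp_all add: mult_less_one_of_le_one)
  have "(\<lambda>M. qgauss_sum a z * qpoch_fin (z * a\<^sup>2) (a\<^sup>2) M * qpoch_fin z (a\<^sup>2) M)
      \<longlonglongrightarrow> qgauss_sum a z * qpoch_inf (z * a\<^sup>2) (a\<^sup>2) * qpoch_inf z (a\<^sup>2)"
    using z ab by (intro tendsto_intros qpoch_fin_tendsto_qpoch_inf) auto
  moreover have "(\<lambda>M. qgauss_sum a (z * (a\<^sup>2) ^ M) * qpoch_fin (z * a) (a\<^sup>2) M ^ 2)
      \<longlonglongrightarrow> 1 * qpoch_inf (z * a) (a\<^sup>2) ^ 2"
    using za ab by (intro tendsto_intros qgauss_sum_tendsto_one[OF a z] qpoch_fin_tendsto_qpoch_inf) auto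
  ultimately have "qgauss_sum a z * qpoch_inf (z * a\<^sup>2) (a\<^sup>2) * qpoch_inf z (a\<^sup>2)
      = qpoch_inf (z * a) (a\<^sup>2) ^ 2"
    unfolding qgauss_sum_iterate[OF a z] using LIMSEQ_unique by fastforce
  moreover have "qpoch_inf (z * a\<^sup>2) (a\<^sup>2) \<noteq> 0" "qpoch_inf z (a\<^sup>2) \<noteq> 0"
    using z ab by (intro qpoch_inf_nonzero; simp)+
  ultimately show ?thesis
    by (simp add: field_simps)
qed

lemma qnum_of_nat:
  assumes "0 < Q"
  shows "qnum Q (real k) = (1 - Q ^ k) / (1 - Q)"
  using assms by (simp add: qnum_def powr_realpow)

lemma qnum_half_of_nat:
  assumes "0 < a"
  shows "qnum (a\<^sup>2) (1/2 + real k) = (1 - a * (a\<^sup>2) ^ k) / (1 - a\<^sup>2)"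
proof -
  have "(a\<^sup>2) powr (1/2 + real k) = (a\<^sup>2) powr (1/2) * (a\<^sup>2) powr (real k)"
    by (simp add: powr_add)
  also have "\<dots> = a * (a\<^sup>2) ^ k"
    using assms by (simp add: powr_half_sqrt powr_realpow)
  finally show ?thesis
    unfolding qnum_def by simp
qed

lemma qfact_eq_qpoch_fin:
  assumes "0 < Q"
  shows "qfact Q n = qpoch_fin Q Q n / (1 - Q) ^ n"
proof (induction n)
  case 0
  then show ?case by (simp add: qfact_def)
next
  case (Suc n)
  then show ?case
    using qnum_of_nat[OF assms, of "Suc n"] by (simp add: qfact_def qpoch_fin_Suc mult_ac)
qed

lemma qhalf_poch_eq_qpoch_fin:
  assumes "0 < a"
  shows "qhalf_poch (a\<^sup>2) n = qpoch_fin a (a\<^sup>2) n / (1 - a\<^sup>2) ^ n"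
proof (induction n)
  case 0
  then show ?case by (simp add: qhalf_poch_def)
next
  case (Suc n)
  then show ?case
    using qnum_half_of_nat[OF assms, of n] by (simp add: qhalf_poch_def qpoch_fin_Suc)
qed

lemma qpoch_fin_add_two: "qpoch_fin x Q (n + 2) = (1 - x) * (1 - x * Q) * qpoch_fin (x * Q\<^sup>2) Q n"
  by (simp add: qpoch_fin_Suc_shift power2_eq_square mult_ac)

lemma summand_eq_qgauss_term:
  fixes q :: real
  assumes "0 < q" "q < 1"
  shows "(qhalf_poch (q\<^sup>2) n)\<^sup>2 / (qfact (q\<^sup>2) n * qfact (q\<^sup>2) (n + 2)) * q ^ (4 * n)
    = qgauss_term q (q ^ 4) n / (1 + q\<^sup>2)"
proof -
  define H P R where "H = qpoch_fin q (q\<^sup>2) n" and "P = qpoch_fin (q\<^sup>2) (q\<^sup>2) n"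
    and "R = qpoch_fin (q ^ 4 * q\<^sup>2) (q\<^sup>2) n"
  have q2: "0 < q\<^sup>2" "q\<^sup>2 < 1"
    using assms by (simp_all add: power_less_one_iff)
  have "q ^ 4 * q\<^sup>2 < 1"
    using q2 assms by (intro mult_less_one_of_le_one) (simp_all add: power_less_one_iff less_imp_le)
  then have nonzero: "P \<noteq> 0" "R \<noteq> 0" "1 - q\<^sup>2 \<noteq> 0" "1 + q\<^sup>2 \<noteq> 0"
    unfolding P_def R_def using q2 qpoch_fin_pos[of _ "q\<^sup>2"] by (smt (verit))+
  have shift: "q\<^sup>2 * (q\<^sup>2)\<^sup>2 = q ^ 4 * q\<^sup>2"
    by (simp flip: power_add power_mult)
  have "qpoch_fin (q\<^sup>2) (q\<^sup>2) (n + 2) = (1 - q\<^sup>2) * (1 - q\<^sup>2) * (1 + q\<^sup>2) * R"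
    unfolding qpoch_fin_add_two R_def shift by (simp add: algebra_simps power2_eq_square)
  moreover have "(1 - q\<^sup>2) ^ (n + 2) = (1 - q\<^sup>2) ^ n * (1 - q\<^sup>2) * (1 - q\<^sup>2)"
    by (simp add: power_add power2_eq_square)
  ultimately have "(qhalf_poch (q\<^sup>2) n)\<^sup>2 / (qfact (q\<^sup>2) n * qfact (q\<^sup>2) (n + 2)) * q ^ (4 * n)
      = (H / (1 - q\<^sup>2) ^ n)\<^sup>2 / (P / (1 - q\<^sup>2) ^ n
          * ((1 - q\<^sup>2) * (1 - q\<^sup>2) * (1 + q\<^sup>2) * R / ((1 - q\<^sup>2) ^ n * (1 - q\<^sup>2) * (1 - q\<^sup>2))))
        * (q ^ 4) ^ n"
    unfolding qhalf_poch_eq_qpoch_fin[OF assms(1)] qfact_eq_qpoch_fin[OF q2(1)] H_def P_def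
    by (simp add: power_mult)
  also have "\<dots> = H\<^sup>2 / (P * R) * (q ^ 4) ^ n / (1 + q\<^sup>2)"
  proof -
    have cancel: "(H / k)\<^sup>2 / (P / k * (s * s * d * R / (k * s * s))) * g = H\<^sup>2 / (P * R) * g / d"
      if "k \<noteq> 0" "s \<noteq> 0" "d \<noteq> 0" for k s d g :: real
      using that nonzero by (simp add: field_simps power2_eq_square)
    show ?thesis
      using nonzero by (intro cancel) simp_all
  qed
  also have "\<dots> = qgauss_term q (q ^ 4) n / (1 + q\<^sup>2)"
    unfolding qgauss_term_def H_def P_def R_def ..
  finally show ?thesis .
qed

lemma qgauss_sum_q4_eq_pi_q:
  fixes q :: real
  assumes "0 < q" "q < 1"
  shows "qgauss_sum q (q ^ 4) / (1 + q\<^sup>2) = (1 + q) ^ 4 * q powr (1/4) / (pi_q q * (1 + q + q\<^sup>2)\<^sup>2)"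
proof -
  have pow: "0 < q ^ j" "q ^ j < 1" if "0 < j" for j :: nat
    using assms that by (simp_all add: power_less_one_iff)
  have q2: "0 \<le> q\<^sup>2" "q\<^sup>2 < 1"
    using pow[of 2] by simp_all
  have shift: "qpoch_inf (q ^ j) (q\<^sup>2) = (1 - q ^ j) * qpoch_inf (q ^ (j + 2)) (q\<^sup>2)" if "0 < j" for j
    using qpoch_inf_shift[of "q ^ j" "q\<^sup>2"] pow[OF that] q2 by (simp flip: power_add)
  define P5 P6 where "P5 = qpoch_inf (q ^ 5) (q\<^sup>2)" and "P6 = qpoch_inf (q ^ 6) (q\<^sup>2)"
  have P1: "qpoch_inf q (q\<^sup>2) = (1 - q) * (1 - q ^ 3) * P5"
    using shift[of 1] shift[of 3] unfolding P5_def by (simp add: eval_nat_numeral)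
  have P4: "qpoch_inf (q ^ 4) (q\<^sup>2) = (1 - q ^ 4) * P6"
    using shift[of 4] unfolding P6_def by simp
  have P2: "qpoch_inf (q\<^sup>2) (q\<^sup>2) = (1 - q\<^sup>2) * (1 - q ^ 4) * P6"
    using shift[of 2] P4 by simp
  have gauss_value: "qgauss_sum q (q ^ 4) = P5\<^sup>2 / (P6 * ((1 - q ^ 4) * P6))"
    using qgauss_sum_eq[OF assms, of "q ^ 4"] pow[of 4] unfolding P4 P5_def P6_def
    by (simp flip: power_add power_Suc2)
  have products_nonzero: "P5 \<noteq> 0" "P6 \<noteq> 0"
    unfolding P5_def P6_def using pow[of 5] pow[of 6] q2 by (simp_all add: qpoch_inf_nonzero)
  have "1 + q\<^sup>2 \<noteq> 0" "1 + q + q\<^sup>2 \<noteq> 0"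
    using assms zero_le_power2[of q] by linarith+
  then have factors_nonzero: "1 - q \<noteq> 0" "1 + q \<noteq> 0" "1 + q\<^sup>2 \<noteq> 0" "1 + q + q\<^sup>2 \<noteq> 0"
    "q powr (1/4) \<noteq> 0"
    using assms by simp_all
  have factor: "1 - q\<^sup>2 = (1 - q) * (1 + q)" "1 - q ^ 3 = (1 - q) * (1 + q + q\<^sup>2)"
    "1 - q ^ 4 = (1 - q) * (1 + q) * (1 + q\<^sup>2)"
    by (simp_all add: algebra_simps power2_eq_square eval_nat_numeral)
  have cancel: "P5\<^sup>2 / (P6 * (A * B * D * P6)) / D
      = B ^ 4 * r / (A * B * r * (A * B * (A * B * D) * P6)\<^sup>2 / (A * (A * E) * P5)\<^sup>2 * E\<^sup>2)"
    if "A \<noteq> 0" "B \<noteq> 0" "D \<noteq> 0" "E \<noteq> 0" "r \<noteq> 0" for A B D E r :: real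
    using that products_nonzero by (simp add: field_simps power2_eq_square eval_nat_numeral)
  show ?thesis
    unfolding gauss_value pi_q_def P1 P2 factor
    using cancel[OF factors_nonzero] by (simp add: mult_ac)
qed

theorem mainTheorem6:
  fixes q :: real
  assumes "0 < q" and "q < 1"
  shows "(\<lambda>n. (qhalf_poch (q^2) n)^2 / (qfact (q^2) n * qfact (q^2) (n+2)) * q^(4*n))
           sums ((1+q)^4 * q powr (1/4) / (pi_q q * (1+q+q^2)^2))"
proof -
  have "q ^ 4 < 1"
    using assms by (simp add: power_less_one_iff)
  then have "(\<lambda>n. qgauss_term q (q ^ 4) n / (1 + q\<^sup>2)) sums (qgauss_sum q (q ^ 4) / (1 + q\<^sup>2))"
    unfolding qgauss_sum_def using assms by (intro sums_divide summable_sums summable_qgauss_term) auto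
  then show ?thesis
    unfolding summand_eq_qgauss_term[OF assms] qgauss_sum_q4_eq_pi_q[OF assms] .
qed

end
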